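(* Let $\Gamma$ be a locally finite connected graph, let $B\subseteq\Gamma$ be finite, and let $A\in\mathcal{A}(B)$. Then the shadow $\partial A=\{\overline f\in\partial_h\Gamma:\overline f\text{ agrees with }\overline d_A\text{ on }B\}$ is nonempty if and only if $A$ is infinite.
   Context: $\Gamma$ is identified with its vertex set with path metric $d$, and $d_x(y)=d(x,y)$. $\overline F(\Gamma,\mathbb{Z})$ is the quotient of $\mathbb{Z}^\Gamma$ (product topology) by the constant functions. The horofunction boundary $\partial_h\Gamma$ is the set of limit points of $\{\overline{d_x}:x\in\Gamma\}$ in $\overline F(\Gamma,\mathbb{Z})$. Two classes agree on $B$ if representatives differ by a constant on $B$. For finite $B$ and $x\in\Gamma$, the atom of $x$ is $\{y: d_y-d_x\text{ is constant on }B\}$. $\mathcal{A}(B)$ is the set of atoms, and $\overline d_A$ is the common restriction to $B$, modulo constants, of $d_x$ for $x\in A$. *)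

theory Defs
  imports "HOL-Analysis.Analysis"
begin

text \<open>A graph on the vertex type 'a is given by an adjacency relation E
(symmetric, irreflexive). The vertex set is the whole type.\<close>

definition locally_finite_connected_graph :: "('a \<Rightarrow> 'a \<Rightarrow> bool) \<Rightarrow> bool" where
  "locally_finite_connected_graph E \<longleftrightarrow>
     (\<forall>x y. E x y \<longrightarrow> E y x) \<and> (\<forall>x. \<not> E x x) \<and>
     (\<forall>x. finite {y. E x y}) \<and> (\<forall>x y. \<exists>n. (E ^^ n) x y)"

definition gdist :: "('a \<Rightarrow> 'a \<Rightarrow> bool) \<Rightarrow> 'a \<Rightarrow> 'a \<Rightarrow> int" where
  "gdist E x y = int (LEAST n. (E ^^ n) x y)"

definition cls :: "('a \<Rightarrow> int) \<Rightarrow> ('a \<Rightarrow> int) set" where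
  "cls f = {g. \<exists>c. \<forall>y. g y = f y + c}"

text \<open>The space \<open>\<overline>F(\<Gamma>,\<int>)\<close>: quotient of \<open>\<int>^\<Gamma>\<close> (product topology of discrete
  copies of \<int>) by the constants, with the quotient topology.\<close>
definition prodZ :: "('a \<Rightarrow> int) topology" where
  "prodZ = product_topology (\<lambda>_. discrete_topology UNIV) UNIV"

definition Fbar_top :: "('a \<Rightarrow> int) set topology" where
  "Fbar_top = topology (\<lambda>U. U \<subseteq> range cls \<and> openin prodZ {f. cls f \<in> U})"

definition horo_boundary :: "('a \<Rightarrow> 'a \<Rightarrow> bool) \<Rightarrow> ('a \<Rightarrow> int) set set" where
  "horo_boundary E = Fbar_top derived_set_of {cls (gdist E x) | x. True}"

definition agree_on :: "'a set \<Rightarrow> ('a \<Rightarrow> int) set \<Rightarrow> ('a \<Rightarrow> int) set \<Rightarrow> bool" where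
  "agree_on B p q \<longleftrightarrow> (\<exists>f\<in>p. \<exists>g\<in>q. \<exists>c. \<forall>y\<in>B. f y = g y + c)"

definition atom :: "('a \<Rightarrow> 'a \<Rightarrow> bool) \<Rightarrow> 'a set \<Rightarrow> 'a \<Rightarrow> 'a set" where
  "atom E B x = {y. \<exists>c. \<forall>b\<in>B. gdist E y b - gdist E x b = c}"

definition atoms :: "('a \<Rightarrow> 'a \<Rightarrow> bool) \<Rightarrow> 'a set \<Rightarrow> 'a set set" where
  "atoms E B = {atom E B x | x. True}"

text \<open>Shadow of an atom A: boundary classes agreeing on B with \<open>\<overline>d_A\<close>, i.e. with
  \<open>\<overline>d_x\<close> for (any, equivalently some) x in A.\<close>
definition shadow :: "('a \<Rightarrow> 'a \<Rightarrow> bool) \<Rightarrow> 'a set \<Rightarrow> 'a set \<Rightarrow> ('a \<Rightarrow> int) set set" where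
  "shadow E B A = {p \<in> horo_boundary E. \<forall>x\<in>A. agree_on B p (cls (gdist E x))}"

end

theory Submission imports Defs begin

text \<open>Agreeing with a given class on a finite set B is an open condition on \<open>\<overline>F(\<Gamma>,\<int>)\<close>.
  Hence a horofunction agreeing with \<open>\<overline>d_A\<close> on B is approximated by infinitely many
  \<open>\<overline>d_x\<close> that still agree with it on B, and all these x lie in the atom A.
  Conversely, normalising \<open>d_x\<close> to vanish at a fixed vertex a places it in the compact box
  \<open>\<Prod>\<^sub>y [-d(a,y), d(a,y)]\<close>, so infinitely many distinct \<open>\<overline>d_x\<close> with x \<in> A accumulate at
  some horofunction, which again agrees on B with one of them and hence with \<open>\<overline>d_A\<close>.\<close>

lemma cls_self [simp]: "f \<in> cls f"
  unfolding cls_def by (auto intro: exI[of _ 0])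

lemma mem_cls_iff: "g \<in> cls f \<longleftrightarrow> (\<exists>c. \<forall>y. g y = f y + c)"
  unfolding cls_def by simp

lemma cls_eq_iff: "cls f = cls g \<longleftrightarrow> (\<exists>c. \<forall>y. f y = g y + c)"
proof
  assume "cls f = cls g"
  then show "\<exists>c. \<forall>y. f y = g y + c" using cls_self[of f] mem_cls_iff by metis
next
  assume "\<exists>c. \<forall>y. f y = g y + c"
  then obtain c where "\<forall>y. f y = g y + c" by blast
  then show "cls f = cls g"
    unfolding cls_def by (auto intro: exI[of _ "c + _"] exI[of _ "_ - c"])
qed

lemma agree_on_cls_iff: "agree_on B (cls f) (cls g) \<longleftrightarrow> (\<exists>c. \<forall>y\<in>B. f y = g y + c)"
proof
  assume "agree_on B (cls f) (cls g)"
  then obtain f' g' c where "f' \<in> cls f" "g' \<in> cls g" and c: "\<forall>y\<in>B. f' y = g' y + c"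
    unfolding agree_on_def by blast
  then obtain c1 c2 where "\<forall>y. f' y = f y + c1" "\<forall>y. g' y = g y + c2"
    by (auto simp: mem_cls_iff)
  then show "\<exists>c. \<forall>y\<in>B. f y = g y + c"
    using c by (intro exI[of _ "c + c2 - c1"]) auto
next
  assume "\<exists>c. \<forall>y\<in>B. f y = g y + c"
  then show "agree_on B (cls f) (cls g)" unfolding agree_on_def using cls_self by blast
qed

lemma agree_on_cls_refl [simp]: "agree_on B (cls f) (cls f)"
  unfolding agree_on_cls_iff by (auto intro: exI[of _ 0])

lemma agree_on_cls_trans:
  "agree_on B (cls f) (cls g) \<Longrightarrow> agree_on B (cls g) (cls h) \<Longrightarrow> agree_on B (cls f) (cls h)"
  unfolding agree_on_cls_iff by (fastforce intro: exI[of _ "_ + _"])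

lemma agree_on_cls_sym: "agree_on B (cls f) (cls g) \<Longrightarrow> agree_on B (cls g) (cls f)"
  unfolding agree_on_cls_iff by (fastforce intro: exI[of _ "- _"])

lemma cls_neq_imp_not_agree_on_pair:
  assumes "cls f \<noteq> cls g"
  obtains y where "\<not> agree_on {z, y} (cls f) (cls g)"
proof -
  obtain y where "f y \<noteq> g y + (f z - g z)"
    using assms by (auto simp: cls_eq_iff)
  then have "\<not> agree_on {z, y} (cls f) (cls g)"
    unfolding agree_on_cls_iff by auto
  then show thesis by (rule that)
qed

lemma topspace_prodZ [simp]: "topspace prodZ = UNIV"
  by (simp add: prodZ_def)

lemma openin_prodZ_cylinder:
  assumes "finite F"
  shows "openin prodZ {k. \<forall>y\<in>F. k y = g y}"
  using assms
proof (induction F rule: finite_induct)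
  case empty
  then show ?case using openin_topspace[of prodZ] by simp
next
  case (insert a F)
  have "openin prodZ {k \<in> topspace prodZ. k a \<in> {g a}}"
    unfolding prodZ_def
    by (rule openin_continuous_map_preimage[OF continuous_map_product_projection]) auto
  then have "openin prodZ ({k. k a = g a} \<inter> {k. \<forall>y\<in>F. k y = g y})"
    using insert by (intro openin_Int) auto
  moreover have "{k. \<forall>y\<in>insert a F. k y = g y} = {k. k a = g a} \<inter> {k. \<forall>y\<in>F. k y = g y}"
    by auto
  ultimately show ?case by simp
qed

lemma istopology_Fbar: "istopology (\<lambda>U. U \<subseteq> range cls \<and> openin prodZ {f. cls f \<in> U})"
  unfolding istopology_def
proof (rule conjI; intro allI impI)
  fix S T :: "('a \<Rightarrow> int) set set"
  assume "S \<subseteq> range cls \<and> openin prodZ {f. cls f \<in> S}"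
    and "T \<subseteq> range cls \<and> openin prodZ {f. cls f \<in> T}"
  then show "S \<inter> T \<subseteq> range cls \<and> openin prodZ {f. cls f \<in> S \<inter> T}"
    using openin_Int[of prodZ "{f. cls f \<in> S}" "{f. cls f \<in> T}"] by (auto simp: Int_def)
next
  fix K :: "('a \<Rightarrow> int) set set set"
  assume "\<forall>U\<in>K. U \<subseteq> range cls \<and> openin prodZ {f. cls f \<in> U}"
  moreover have "{f. cls f \<in> \<Union>K} = (\<Union>U\<in>K. {f. cls f \<in> U})" by auto
  ultimately show "\<Union>K \<subseteq> range cls \<and> openin prodZ {f. cls f \<in> \<Union>K}"
    by (auto intro!: openin_Union)
qed

lemma openin_Fbar_top: "openin Fbar_top U \<longleftrightarrow> U \<subseteq> range cls \<and> openin prodZ {f. cls f \<in> U}"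
  unfolding Fbar_top_def topology_inverse'[OF istopology_Fbar] by simp

lemma topspace_Fbar_top [simp]: "topspace Fbar_top = range cls"
proof (rule antisym)
  show "topspace Fbar_top \<subseteq> range cls"
    unfolding topspace_def using openin_Fbar_top by auto
  have "openin Fbar_top (range cls)"
    unfolding openin_Fbar_top using openin_topspace[of prodZ] by simp
  then show "range cls \<subseteq> topspace Fbar_top" by (rule openin_subset)
qed

lemma continuous_map_cls: "continuous_map prodZ Fbar_top cls"
  unfolding continuous_map_def by (auto simp: openin_Fbar_top)

lemma openin_Fbar_top_agree_on:
  assumes "finite B"
  shows "openin Fbar_top {p \<in> range cls. agree_on B p (cls f)}"
proof -
  let ?V = "{h. \<exists>c. \<forall>y\<in>B. h y = f y + c}"
  have "openin prodZ ?V"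
  proof (subst openin_subopen, intro ballI)
    fix h assume "h \<in> ?V"
    then obtain c where "\<forall>y\<in>B. h y = f y + c" by blast
    then have "{k. \<forall>y\<in>B. k y = h y} \<subseteq> ?V" by auto
    then show "\<exists>T. openin prodZ T \<and> h \<in> T \<and> T \<subseteq> ?V"
      using openin_prodZ_cylinder[OF assms] by blast
  qed
  moreover have "{h. cls h \<in> {p \<in> range cls. agree_on B p (cls f)}} = ?V"
    using rangeI[of cls] by (simp add: agree_on_cls_iff)
  ultimately show ?thesis
    unfolding openin_Fbar_top by simp
qed

lemma t1_space_Fbar_top: "t1_space Fbar_top"
  unfolding t1_space_def
proof (intro ballI impI)
  fix p q :: "('a \<Rightarrow> int) set"
  assume "p \<in> topspace Fbar_top" "q \<in> topspace Fbar_top" "p \<noteq> q"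
  then obtain f g where pq: "p = cls f" "q = cls g" by auto
  then obtain y where y: "\<not> agree_on {undefined, y} q p"
    using \<open>p \<noteq> q\<close> cls_neq_imp_not_agree_on_pair by metis
  let ?U = "{r \<in> range cls. agree_on {undefined, y} r (cls f)}"
  have "openin Fbar_top ?U" by (rule openin_Fbar_top_agree_on) simp
  moreover have "p \<in> ?U" unfolding pq by simp
  moreover have "q \<notin> ?U" using y pq by simp
  ultimately show "\<exists>U. openin Fbar_top U \<and> p \<in> U \<and> q \<notin> U" by blast
qed

lemma derived_set_of_Fbar_top_subset: "Fbar_top derived_set_of S \<subseteq> range cls"
  using derived_set_of_subset_topspace[of Fbar_top S] by simp

lemma infinite_agree_on_near_limit_point:
  assumes "finite B" and "p \<in> Fbar_top derived_set_of S"
  shows "infinite {q \<in> S. agree_on B q p}"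
proof -
  obtain f where p: "p = cls f"
    using assms(2) derived_set_of_Fbar_top_subset by blast
  let ?U = "{q \<in> range cls. agree_on B q (cls f)}"
  have "p \<in> ?U" unfolding p by simp
  moreover have "\<forall>U. p \<in> U \<and> openin Fbar_top U \<longrightarrow> infinite (S \<inter> U)"
    using assms(2)
    by (simp add: t1_space_derived_set_of_infinite_openin[THEN iffD1, OF t1_space_Fbar_top])
  ultimately have "infinite (S \<inter> ?U)"
    using openin_Fbar_top_agree_on[OF assms(1), of f] by simp
  moreover have "S \<inter> ?U \<subseteq> {q \<in> S. agree_on B q p}" unfolding p by blast
  ultimately show ?thesis by (meson rev_finite_subset)
qed

lemma compactin_Fbar_top_box:
  "compactin Fbar_top (cls ` PiE UNIV (\<lambda>y. {- r y .. (r y :: int)}))"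
proof (rule image_compactin[OF _ continuous_map_cls])
  show "compactin prodZ (PiE UNIV (\<lambda>y. {- r y .. r y}))"
    unfolding prodZ_def compactin_PiE by (simp add: compactin_discrete_topology)
qed

lemma relpowp_sym:
  assumes "\<forall>x y. E x y \<longrightarrow> E y x" and "(E ^^ n) x y"
  shows "(E ^^ n) y x"
  using assms(2)
proof (induction n arbitrary: x y)
  case 0
  then show ?case by simp
next
  case (Suc n)
  then obtain z where "(E ^^ n) x z" "E z y" by (meson relpowp_Suc_E)
  then show ?case using Suc.IH assms(1) by (meson relpowp_Suc_I2)
qed

locale connected_graph =
  fixes E :: "'a \<Rightarrow> 'a \<Rightarrow> bool"
  assumes sym: "\<forall>x y. E x y \<longrightarrow> E y x" and connected: "\<forall>x y. \<exists>n. (E ^^ n) x y"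
begin

lemma relpowp_gdist: "(E ^^ nat (gdist E x y)) x y"
  unfolding gdist_def nat_int using connected by (meson LeastI_ex)

lemma gdist_le: "(E ^^ n) x y \<Longrightarrow> gdist E x y \<le> int n"
  unfolding gdist_def by (simp add: Least_le)

lemma gdist_nonneg: "gdist E x y \<ge> 0"
  unfolding gdist_def by simp

lemma gdist_eq_0_iff: "gdist E x y = 0 \<longleftrightarrow> x = y"
  using relpowp_gdist[of x y] gdist_le[of 0 x x] gdist_nonneg[of x x] by auto

lemma gdist_self [simp]: "gdist E x x = 0"
  by (simp add: gdist_eq_0_iff)

lemma gdist_triangle: "gdist E x z \<le> gdist E x y + gdist E y z"
proof -
  have "(E ^^ (nat (gdist E x y) + nat (gdist E y z))) x z"
    using relpowp_gdist[of x y] relpowp_gdist[of y z] unfolding relpowp_add by blast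
  then show ?thesis using gdist_le gdist_nonneg by fastforce
qed

lemma gdist_commute: "gdist E x y = gdist E y x"
proof -
  have "gdist E x y \<le> gdist E y x" for x y
    using gdist_le[OF relpowp_sym[OF sym relpowp_gdist[of y x]]] gdist_nonneg by simp
  then show ?thesis by (meson antisym)
qed

lemma inj_cls_gdist: "inj (\<lambda>x. cls (gdist E x))"
proof (rule injI)
  fix x x' assume "cls (gdist E x) = cls (gdist E x')"
  then obtain c where c: "\<forall>y. gdist E x y = gdist E x' y + c" by (auto simp: cls_eq_iff)
  then have "gdist E x x' = c" and "0 = gdist E x' x + c"
    using c[rule_format, of x'] c[rule_format, of x] by simp_all
  then have "gdist E x x' = 0" using gdist_nonneg[of x x'] gdist_nonneg[of x' x] by linarith
  then show "x = x'" by (simp add: gdist_eq_0_iff)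
qed

lemma cls_gdist_in_box:
  "cls (gdist E x) \<in> cls ` PiE UNIV (\<lambda>y. {- gdist E a y .. gdist E a y})"
proof -
  let ?g = "\<lambda>y. gdist E x y - gdist E x a"
  have "cls (gdist E x) = cls ?g" by (auto simp: cls_eq_iff)
  moreover have "?g \<in> PiE UNIV (\<lambda>y. {- gdist E a y .. gdist E a y})"
  proof (unfold PiE_UNIV_domain, rule Pi_I)
    fix y
    show "?g y \<in> {- gdist E a y .. gdist E a y}"
      using gdist_triangle[of x y a] gdist_triangle[of x a y] gdist_commute[of y a] by simp
  qed
  ultimately show ?thesis by (rule image_eqI)
qed

lemma mem_atom_iff: "y \<in> atom E B x \<longleftrightarrow> agree_on B (cls (gdist E y)) (cls (gdist E x))"
  unfolding atom_def agree_on_cls_iff by (simp add: diff_eq_eq add.commute)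

lemma shadow_atom:
  "shadow E B (atom E B a) = {p \<in> horo_boundary E. agree_on B p (cls (gdist E a))}"
  (is "?L = ?R")
proof
  have "a \<in> atom E B a" by (simp add: mem_atom_iff)
  then show "?L \<subseteq> ?R" unfolding shadow_def by blast
  show "?R \<subseteq> ?L"
  proof (unfold shadow_def, clarify)
    fix p x assume p: "p \<in> horo_boundary E" "agree_on B p (cls (gdist E a))"
      and "x \<in> atom E B a"
    obtain f where f: "p = cls f"
      using p(1) derived_set_of_Fbar_top_subset unfolding horo_boundary_def by blast
    have "agree_on B (cls (gdist E a)) (cls (gdist E x))"
      using \<open>x \<in> atom E B a\<close> unfolding mem_atom_iff by (rule agree_on_cls_sym)
    then show "agree_on B p (cls (gdist E x))"
      using p(2) unfolding f by (rule agree_on_cls_trans[rotated])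
  qed
qed

end

theorem mainTheorem15:
  fixes E :: "'a \<Rightarrow> 'a \<Rightarrow> bool" and B A :: "'a set"
  assumes "locally_finite_connected_graph E"
    and "finite B"
    and "A \<in> atoms E B"
  shows "shadow E B A \<noteq> {} \<longleftrightarrow> infinite A"
proof -
  interpret connected_graph E
    using assms(1) unfolding locally_finite_connected_graph_def by unfold_locales auto
  obtain a where A: "A = atom E B a" using assms(3) unfolding atoms_def by auto
  let ?D = "\<lambda>x. cls (gdist E x)"
  have horo: "horo_boundary E = Fbar_top derived_set_of range ?D"
    unfolding horo_boundary_def by (simp add: full_SetCompr_eq)
  show ?thesis
  proof
    assume "shadow E B A \<noteq> {}"
    then obtain p where p: "p \<in> Fbar_top derived_set_of range ?D" "agree_on B p (?D a)"
      unfolding A shadow_atom horo by blast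
    then obtain f where f: "p = cls f" using derived_set_of_Fbar_top_subset by blast
    have "{q \<in> range ?D. agree_on B q p} \<subseteq> ?D ` A"
    proof clarify
      fix x assume "agree_on B (?D x) p"
      then have "agree_on B (?D x) (?D a)" using p(2) unfolding f by (rule agree_on_cls_trans)
      then have "x \<in> A" unfolding A mem_atom_iff .
      then show "?D x \<in> ?D ` A" by (rule imageI)
    qed
    then show "infinite A"
      using infinite_agree_on_near_limit_point[OF assms(2) p(1)]
      by (meson finite_imageI rev_finite_subset)
  next
    assume "infinite A"
    then have "infinite (?D ` A)"
      by (simp add: finite_image_iff inj_on_subset[OF inj_cls_gdist])
    moreover have "?D ` A \<subseteq> cls ` PiE UNIV (\<lambda>y. {- gdist E a y .. gdist E a y})"
      by (intro image_subsetI cls_gdist_in_box)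
    ultimately have "cls ` PiE UNIV (\<lambda>y. {- gdist E a y .. gdist E a y})
        \<inter> Fbar_top derived_set_of (?D ` A) \<noteq> {}"
      by (intro compactin_imp_Bolzano_Weierstrass[OF compactin_Fbar_top_box] conjI)
    then obtain p where p: "p \<in> Fbar_top derived_set_of (?D ` A)" by blast
    then obtain f where f: "p = cls f" using derived_set_of_Fbar_top_subset by blast
    obtain x where x: "x \<in> A" "agree_on B (?D x) (cls f)"
      using not_finite_existsD[OF infinite_agree_on_near_limit_point[OF assms(2) p]] f by blast
    have "agree_on B (?D x) (?D a)" using x(1) unfolding A mem_atom_iff .
    then have "agree_on B p (?D a)"
      unfolding f by (rule agree_on_cls_trans[OF agree_on_cls_sym[OF x(2)]])
    moreover have "p \<in> horo_boundary E"
      using p derived_set_of_mono[of "?D ` A" "range ?D"] unfolding horo by blast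
    ultimately show "shadow E B A \<noteq> {}"
      unfolding A shadow_atom by blast
  qed
qed

end
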